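(* Let $k$ be a field of characteristic not $2$, $\lambda\in k^\times$, $(V,\circ)$ a commutative associative algebra over $k$ with unit $e$, $\Theta:V\times V\to k$ an antisymmetric bilinear form, and $A_\Theta$ the algebra generated by $V$ with relations $vw-wv=\lambda\Theta(v,w)$ for $v,w\in V$ (so $A_\Theta=k[x^1,\dots,x^n]$ when $\Theta=0$). If $B:V\times V\to A_\Theta$ is bilinear and satisfies $B(v\circ w,z)+B(v,w\circ z)=\lambda^{-1}[B(v,z),w]$ for all $v,w,z\in V$, then $B=0$. Consequently the associated calculus $[\mathrm dv,w]=\lambda\,\mathrm d(v\circ w)$ admits no nonzero bimodule inner product of the form $(\mathrm dv,\mathrm dw)=B(v,w)$.
   Context: Here $[a,w]=aw-wa$ in $A_\Theta$. A bimodule inner product on $\Omega^1$ is a bimodule map $(\ ,\ ):\Omega^1\otimes_A\Omega^1\to A_\Theta$; for inner products of the form $(\mathrm dv,\mathrm dw)=B(v,w)$ the bimodule property is equivalent to the displayed identity. $A_\Theta$ is filtered by polynomial degree in elements of $V$. *)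

theory Defs
  imports Complex_Main
begin

text \<open>The free associative k-algebra on the set V: elements are finitely supported
  functions from words (lists of elements of V) to k.  A_Theta is its quotient by the
  two-sided ideal generated by linearity of the letters and the relations
  v w - w v = lambda Theta(v,w).  Instead of forming the quotient type we work with
  representatives modulo the ideal.\<close>

definition fa_fin :: "('v list \<Rightarrow> 'k::comm_ring_1) \<Rightarrow> bool" where
  "fa_fin f \<longleftrightarrow> finite {u. f u \<noteq> 0}"

definition fa_mult :: "('v list \<Rightarrow> 'k::comm_ring_1) \<Rightarrow> ('v list \<Rightarrow> 'k) \<Rightarrow> ('v list \<Rightarrow> 'k)" where
  "fa_mult f g = (\<lambda>w. \<Sum>i\<le>length w. f (take i w) * g (drop i w))"

definition fa_add :: "('v list \<Rightarrow> 'k::comm_ring_1) \<Rightarrow> ('v list \<Rightarrow> 'k) \<Rightarrow> ('v list \<Rightarrow> 'k)" where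
  "fa_add f g = (\<lambda>u. f u + g u)"

definition fa_diff :: "('v list \<Rightarrow> 'k::comm_ring_1) \<Rightarrow> ('v list \<Rightarrow> 'k) \<Rightarrow> ('v list \<Rightarrow> 'k)" where
  "fa_diff f g = (\<lambda>u. f u - g u)"

definition fa_smul :: "'k::comm_ring_1 \<Rightarrow> ('v list \<Rightarrow> 'k) \<Rightarrow> ('v list \<Rightarrow> 'k)" where
  "fa_smul c f = (\<lambda>u. c * f u)"

definition fa_one :: "'v list \<Rightarrow> 'k::comm_ring_1" where
  "fa_one = (\<lambda>u. if u = [] then 1 else 0)"

definition fa_zero :: "'v list \<Rightarrow> 'k::comm_ring_1" where
  "fa_zero = (\<lambda>u. 0)"

definition fa_letter :: "'v \<Rightarrow> 'v list \<Rightarrow> 'k::comm_ring_1" where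
  "fa_letter v = (\<lambda>u. if u = [v] then 1 else 0)"

definition fa_comm :: "('v list \<Rightarrow> 'k::comm_ring_1) \<Rightarrow> ('v list \<Rightarrow> 'k) \<Rightarrow> ('v list \<Rightarrow> 'k)" where
  "fa_comm f g = fa_diff (fa_mult f g) (fa_mult g f)"

inductive_set theta_ideal ::
  "('k::field \<Rightarrow> 'v::ab_group_add \<Rightarrow> 'v) \<Rightarrow> ('v \<Rightarrow> 'v \<Rightarrow> 'k) \<Rightarrow> 'k \<Rightarrow> ('v list \<Rightarrow> 'k) set"
  for sc :: "'k::field \<Rightarrow> 'v::ab_group_add \<Rightarrow> 'v" and \<Theta> :: "'v \<Rightarrow> 'v \<Rightarrow> 'k" and lam :: 'k
where
  lin_add: "fa_diff (fa_letter (v + w)) (fa_add (fa_letter v) (fa_letter w)) \<in> theta_ideal sc \<Theta> lam"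
| lin_smul: "fa_diff (fa_letter (sc c v)) (fa_smul c (fa_letter v)) \<in> theta_ideal sc \<Theta> lam"
| rel: "fa_diff (fa_comm (fa_letter v) (fa_letter w)) (fa_smul (lam * \<Theta> v w) fa_one)
          \<in> theta_ideal sc \<Theta> lam"
| zero: "fa_zero \<in> theta_ideal sc \<Theta> lam"
| add: "f \<in> theta_ideal sc \<Theta> lam \<Longrightarrow> g \<in> theta_ideal sc \<Theta> lam \<Longrightarrow> fa_add f g \<in> theta_ideal sc \<Theta> lam"
| smul: "f \<in> theta_ideal sc \<Theta> lam \<Longrightarrow> fa_smul c f \<in> theta_ideal sc \<Theta> lam"
| lmult: "f \<in> theta_ideal sc \<Theta> lam \<Longrightarrow> fa_fin g \<Longrightarrow> fa_mult g f \<in> theta_ideal sc \<Theta> lam"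
| rmult: "f \<in> theta_ideal sc \<Theta> lam \<Longrightarrow> fa_fin g \<Longrightarrow> fa_mult f g \<in> theta_ideal sc \<Theta> lam"

definition theta_eq ::
  "('k::field \<Rightarrow> 'v::ab_group_add \<Rightarrow> 'v) \<Rightarrow> ('v \<Rightarrow> 'v \<Rightarrow> 'k) \<Rightarrow> 'k \<Rightarrow> ('v list \<Rightarrow> 'k) \<Rightarrow> ('v list \<Rightarrow> 'k) \<Rightarrow> bool"
  where "theta_eq sc \<Theta> lam f g \<longleftrightarrow> fa_diff f g \<in> theta_ideal sc \<Theta> lam"

end

theory Submission
  imports Defs
begin

text \<open>Put \<open>w = e\<close> in the defining identity: \<open>2 B(v,z) = \<lambda>\<^sup>-\<^sup>1 [B(v,z), e]\<close>. In \<open>A\<^sub>\<Theta>\<close> the map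
  \<open>f \<mapsto> [f, e]\<close> lowers the degree, because \<open>[x\<^sub>1\<cdots>x\<^sub>n, e]\<close> is a sum of terms in which one letter
  \<open>x\<^sub>i\<close> is replaced by the scalar \<open>[x\<^sub>i, e] = \<lambda>\<Theta>(x\<^sub>i, e)\<close>. Hence it is nilpotent on every element,
  and iterating the identity gives \<open>B(v,z) = (2\<lambda>)\<^sup>-\<^sup>n [\<dots>[B(v,z), e]\<dots>, e] = 0\<close> for large \<open>n\<close>.\<close>

lemmas fa_pointwise_defs = fa_add_def fa_diff_def fa_smul_def fa_zero_def

lemma fa_mult_one_left: "fa_mult fa_one g = g"
proof
  fix w
  have "(\<Sum>i\<le>length w. fa_one (take i w) * g (drop i w)) =
      (\<Sum>i\<in>{0}. fa_one (take i w) * g (drop i w))"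
    by (rule sum.mono_neutral_right) (auto simp: fa_one_def)
  then show "fa_mult fa_one g w = g w" by (simp add: fa_mult_def fa_one_def)
qed

lemma fa_mult_one_right: "fa_mult g fa_one = g"
proof
  fix w
  have "(\<Sum>i\<le>length w. g (take i w) * fa_one (drop i w)) =
      (\<Sum>i\<in>{length w}. g (take i w) * fa_one (drop i w))"
    by (rule sum.mono_neutral_right) (auto simp: fa_one_def)
  then show "fa_mult g fa_one w = g w" by (simp add: fa_mult_def fa_one_def)
qed

lemma fa_mult_letter_left:
  "fa_mult (fa_letter a) g = (\<lambda>w. case w of [] \<Rightarrow> 0 | y # w' \<Rightarrow> if y = a then g w' else 0)"
proof
  fix w show "fa_mult (fa_letter a) g w = (case w of [] \<Rightarrow> 0 | y # w' \<Rightarrow> if y = a then g w' else 0)"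
  proof (cases w)
    case Nil then show ?thesis by (simp add: fa_mult_def fa_letter_def)
  next
    case (Cons y w')
    have "(\<Sum>i\<le>length w. fa_letter a (take i w) * g (drop i w)) =
      (\<Sum>i\<in>{1}. fa_letter a (take i w) * g (drop i w))"
      by (rule sum.mono_neutral_right)
        (use Cons in \<open>auto simp: fa_letter_def take_Cons' split: if_splits\<close>)
    then show ?thesis using Cons by (simp add: fa_mult_def fa_letter_def)
  qed
qed

lemma fa_mult_assoc_letter:
  "fa_mult (fa_mult (fa_letter a) g) h = fa_mult (fa_letter a) (fa_mult g h)"
  unfolding fa_mult_letter_left
proof
  fix w show "fa_mult (\<lambda>w. case w of [] \<Rightarrow> 0 | y # w' \<Rightarrow> if y = a then g w' else 0) h w =
         (case w of [] \<Rightarrow> 0 | y # w' \<Rightarrow> if y = a then fa_mult g h w' else 0)"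
    by (cases w) (auto simp del: sum.atMost_Suc simp add: fa_mult_def sum.atMost_Suc_shift)
qed

lemma fa_mult_add_left: "fa_mult (fa_add a b) c = fa_add (fa_mult a c) (fa_mult b c)"
  unfolding fa_mult_def fa_add_def by (simp add: distrib_right sum.distrib)

lemma fa_mult_add_right: "fa_mult c (fa_add a b) = fa_add (fa_mult c a) (fa_mult c b)"
  unfolding fa_mult_def fa_add_def by (simp add: distrib_left sum.distrib)

lemma fa_mult_diff_left: "fa_mult (fa_diff a b) c = fa_diff (fa_mult a c) (fa_mult b c)"
  unfolding fa_mult_def fa_diff_def by (simp add: left_diff_distrib sum_subtractf)

lemma fa_mult_diff_right: "fa_mult c (fa_diff a b) = fa_diff (fa_mult c a) (fa_mult c b)"
  unfolding fa_mult_def fa_diff_def by (simp add: right_diff_distrib sum_subtractf)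

lemma fa_mult_smul_left: "fa_mult (fa_smul r a) c = fa_smul r (fa_mult a c)"
  unfolding fa_mult_def fa_smul_def by (simp add: sum_distrib_left mult.assoc)

lemma fa_mult_smul_right: "fa_mult c (fa_smul r a) = fa_smul r (fa_mult c a)"
  unfolding fa_mult_def fa_smul_def by (simp add: sum_distrib_left ac_simps)

lemma fa_fin_letter: "fa_fin (fa_letter v)"
  unfolding fa_fin_def fa_letter_def by (rule finite_subset[of _ "{[v]}"]) auto

lemma fa_fin_induct [consumes 1, case_names zero update]:
  assumes "fa_fin f"
    and zero: "P fa_zero"
    and update: "\<And>g u c. fa_fin g \<Longrightarrow> g u = 0 \<Longrightarrow> c \<noteq> 0 \<Longrightarrow> P g \<Longrightarrow> P (g(u := c))"
  shows "P f"
proof -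
  have "\<forall>f. {u. f u \<noteq> 0} = S \<longrightarrow> P f" if "finite S" for S
    using that
  proof (induction S rule: finite_induct)
    case empty
    have "f = fa_zero" if "{u. f u \<noteq> 0} = {}" for f :: "'a list \<Rightarrow> 'b"
      using that by (auto simp: fa_zero_def)
    then show ?case using zero by blast
  next
    case (insert u S)
    show ?case
    proof (intro allI impI)
      fix f :: "'a list \<Rightarrow> 'b" assume supp: "{u. f u \<noteq> 0} = insert u S"
      have supp': "{w. (f(u := 0)) w \<noteq> 0} = S" using supp insert.hyps(2) by auto
      have "P (f(u := 0))" using insert.IH supp' by blast
      moreover have "fa_fin (f(u := 0))" using supp' insert.hyps(1) by (simp add: fa_fin_def)
      moreover have "f u \<noteq> 0" using supp by auto
      ultimately show "P f" using update[of "f(u := 0)" u "f u"] by simp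
    qed
  qed
  then show ?thesis using \<open>fa_fin f\<close> by (auto simp: fa_fin_def)
qed

definition fa_word :: "'v list \<Rightarrow> 'v list \<Rightarrow> 'k::comm_ring_1" where
  "fa_word u = (\<lambda>w. if w = u then 1 else 0)"

lemma fa_word_Nil: "fa_word [] = fa_one"
  by (auto simp: fa_word_def fa_one_def)

lemma fa_word_Cons: "fa_word (x # u) = fa_mult (fa_letter x) (fa_word u)"
  unfolding fa_mult_letter_left fa_word_def by (auto split: list.split)

lemma fa_update_eq_add_word: "g u = 0 \<Longrightarrow> g(u := c) = fa_add g (fa_smul c (fa_word u))"
  by (auto simp: fa_add_def fa_smul_def fa_word_def)

definition fa_filtration :: "nat \<Rightarrow> ('v list \<Rightarrow> 'k::comm_ring_1) set" where
  "fa_filtration n = {f. fa_fin f \<and> (\<forall>w. f w \<noteq> 0 \<longrightarrow> length w < n)}"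

lemma fa_filtration_zero: "fa_zero \<in> fa_filtration n"
  by (simp add: fa_filtration_def fa_fin_def fa_zero_def)

lemma fa_filtration_add:
  assumes "f \<in> fa_filtration n" "g \<in> fa_filtration n"
  shows "fa_add f g \<in> fa_filtration n"
proof -
  have "{w. fa_add f g w \<noteq> 0} \<subseteq> {w. f w \<noteq> 0} \<union> {w. g w \<noteq> 0}"
    by (auto simp: fa_add_def)
  then show ?thesis
    using assms by (auto simp: fa_filtration_def fa_fin_def fa_add_def intro: finite_subset)
qed

lemma fa_filtration_smul:
  assumes "f \<in> fa_filtration n"
  shows "fa_smul c f \<in> fa_filtration n"
proof -
  have "{w. fa_smul c f w \<noteq> 0} \<subseteq> {w. f w \<noteq> 0}" by (auto simp: fa_smul_def)
  then show ?thesis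
    using assms by (auto simp: fa_filtration_def fa_fin_def intro: finite_subset)
qed

lemma fa_filtration_mono: "m \<le> n \<Longrightarrow> f \<in> fa_filtration m \<Longrightarrow> f \<in> fa_filtration n"
  by (auto simp: fa_filtration_def)

lemma fa_word_in_filtration: "length u < n \<Longrightarrow> fa_word u \<in> fa_filtration n"
  by (auto simp: fa_filtration_def fa_fin_def fa_word_def intro: finite_subset[of _ "{u}"])

lemma fa_mult_letter_filtration:
  assumes "g \<in> fa_filtration n"
  shows "fa_mult (fa_letter x) g \<in> fa_filtration (Suc n)"
proof -
  have supp: "{w. fa_mult (fa_letter x) g w \<noteq> 0} \<subseteq> Cons x ` {w. g w \<noteq> 0}"
  proof
    fix w assume "w \<in> {w. fa_mult (fa_letter x) g w \<noteq> 0}"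
    then show "w \<in> Cons x ` {w. g w \<noteq> 0}"
      unfolding fa_mult_letter_left by (cases w) (auto split: if_splits)
  qed
  have "finite (Cons x ` {w. g w \<noteq> 0})" using assms by (simp add: fa_filtration_def fa_fin_def)
  then have "fa_fin (fa_mult (fa_letter x) g)" unfolding fa_fin_def using supp by (rule finite_subset[rotated])
  moreover have "length w < Suc n" if "fa_mult (fa_letter x) g w \<noteq> 0" for w
    using that supp assms by (auto simp: fa_filtration_def)
  ultimately show ?thesis by (simp add: fa_filtration_def)
qed

lemma fa_update_filtration:
  assumes "g(u := c) \<in> fa_filtration n" "g u = 0" "c \<noteq> 0"
  shows "g \<in> fa_filtration n" "length u < n"
proof -
  have "{w. g w \<noteq> 0} \<subseteq> {w. (g(u := c)) w \<noteq> 0}" using assms(2) by auto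
  moreover have "finite {w. (g(u := c)) w \<noteq> 0}" using assms(1) by (simp add: fa_filtration_def fa_fin_def)
  ultimately have "fa_fin g" unfolding fa_fin_def by (rule finite_subset)
  then show "g \<in> fa_filtration n"
    using assms(1,2) by (auto simp: fa_filtration_def split: if_splits)
  show "length u < n" using assms(1,3) by (auto simp: fa_filtration_def)
qed

lemma fa_fin_in_filtration:
  assumes "fa_fin f"
  obtains n where "f \<in> fa_filtration n"
proof
  have "finite (length ` {w. f w \<noteq> 0})" using assms by (simp add: fa_fin_def)
  then show "f \<in> fa_filtration (Suc (Max (length ` {w. f w \<noteq> 0})))"
    using assms by (auto simp: fa_filtration_def le_imp_less_Suc)
qed

definition fa_ad_right :: "'v \<Rightarrow> ('v list \<Rightarrow> 'k::comm_ring_1) \<Rightarrow> ('v list \<Rightarrow> 'k)" where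
  "fa_ad_right e f = fa_comm f (fa_letter e)"

lemma fa_ad_right_add: "fa_ad_right e (fa_add a b) = fa_add (fa_ad_right e a) (fa_ad_right e b)"
  unfolding fa_ad_right_def fa_comm_def fa_mult_add_left fa_mult_add_right
  by (auto simp: fa_add_def fa_diff_def)

lemma fa_ad_right_smul: "fa_ad_right e (fa_smul r a) = fa_smul r (fa_ad_right e a)"
  unfolding fa_ad_right_def fa_comm_def fa_mult_smul_left fa_mult_smul_right
  by (auto simp: fa_smul_def fa_diff_def algebra_simps)

lemma fa_ad_right_pow_smul: "(fa_ad_right e ^^ n) (fa_smul r a) = fa_smul r ((fa_ad_right e ^^ n) a)"
  by (induction n) (auto simp: fa_ad_right_smul)

lemma fa_ad_right_one: "fa_ad_right e fa_one = fa_zero"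
  unfolding fa_ad_right_def fa_comm_def fa_mult_one_left fa_mult_one_right
  by (auto simp: fa_diff_def fa_zero_def)

lemma fa_ad_right_zero: "fa_ad_right e fa_zero = fa_zero"
  by (auto simp: fa_ad_right_def fa_comm_def fa_mult_def fa_pointwise_defs)

lemma fa_ad_right_mult_letter:
  "fa_ad_right e (fa_mult (fa_letter x) g) =
     fa_add (fa_mult (fa_letter x) (fa_ad_right e g)) (fa_mult (fa_ad_right e (fa_letter x)) g)"
  unfolding fa_ad_right_def fa_comm_def fa_mult_diff_left fa_mult_diff_right fa_mult_assoc_letter
  by (auto simp: fa_add_def fa_diff_def)

context
  fixes sc :: "'k::field \<Rightarrow> 'v::ab_group_add \<Rightarrow> 'v" and \<Theta> :: "'v \<Rightarrow> 'v \<Rightarrow> 'k" and lam :: 'k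
begin

abbreviation (input) theta_equiv :: "('v list \<Rightarrow> 'k) \<Rightarrow> ('v list \<Rightarrow> 'k) \<Rightarrow> bool" (infix "\<approx>" 50)
  where "f \<approx> g \<equiv> theta_eq sc \<Theta> lam f g"

lemma theta_ideal_diff:
  assumes "f \<in> theta_ideal sc \<Theta> lam" "g \<in> theta_ideal sc \<Theta> lam"
  shows "fa_diff f g \<in> theta_ideal sc \<Theta> lam"
proof -
  have "fa_diff f g = fa_add f (fa_smul (-1) g)" by (auto simp: fa_pointwise_defs)
  then show ?thesis using assms by (simp add: theta_ideal.add theta_ideal.smul)
qed

lemma theta_eq_refl: "f \<approx> f"
proof -
  have "fa_diff f f = fa_zero" by (auto simp: fa_pointwise_defs)
  then show ?thesis by (simp add: theta_eq_def theta_ideal.zero)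
qed

lemma theta_eq_trans: "f \<approx> g \<Longrightarrow> g \<approx> h \<Longrightarrow> f \<approx> h"
proof -
  have "fa_diff f h = fa_add (fa_diff f g) (fa_diff g h)" by (auto simp: fa_pointwise_defs)
  then show "f \<approx> g \<Longrightarrow> g \<approx> h \<Longrightarrow> f \<approx> h" by (simp add: theta_eq_def theta_ideal.add)
qed

lemma theta_eq_add: "f \<approx> g \<Longrightarrow> f' \<approx> g' \<Longrightarrow> fa_add f f' \<approx> fa_add g g'"
proof -
  have "fa_diff (fa_add f f') (fa_add g g') = fa_add (fa_diff f g) (fa_diff f' g')"
    by (auto simp: fa_pointwise_defs)
  then show "f \<approx> g \<Longrightarrow> f' \<approx> g' \<Longrightarrow> fa_add f f' \<approx> fa_add g g'"
    by (simp add: theta_eq_def theta_ideal.add)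
qed

lemma theta_eq_smul: "f \<approx> g \<Longrightarrow> fa_smul c f \<approx> fa_smul c g"
proof -
  have "fa_diff (fa_smul c f) (fa_smul c g) = fa_smul c (fa_diff f g)"
    by (auto simp: fa_pointwise_defs algebra_simps)
  then show "f \<approx> g \<Longrightarrow> fa_smul c f \<approx> fa_smul c g" by (simp add: theta_eq_def theta_ideal.smul)
qed

lemma theta_eq_mult_left: "fa_fin h \<Longrightarrow> f \<approx> g \<Longrightarrow> fa_mult h f \<approx> fa_mult h g"
  unfolding theta_eq_def fa_mult_diff_right[symmetric] by (rule theta_ideal.lmult)

lemma theta_eq_mult_right: "fa_fin h \<Longrightarrow> f \<approx> g \<Longrightarrow> fa_mult f h \<approx> fa_mult g h"
  unfolding theta_eq_def fa_mult_diff_left[symmetric] by (rule theta_ideal.rmult)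

lemma theta_eq_ad_right: "f \<approx> g \<Longrightarrow> fa_ad_right e f \<approx> fa_ad_right e g"
proof -
  have "fa_diff (fa_ad_right e f) (fa_ad_right e g) =
      fa_diff (fa_mult (fa_diff f g) (fa_letter e)) (fa_mult (fa_letter e) (fa_diff f g))"
    unfolding fa_ad_right_def fa_comm_def fa_mult_diff_left fa_mult_diff_right
    by (auto simp: fa_diff_def)
  then show "f \<approx> g \<Longrightarrow> fa_ad_right e f \<approx> fa_ad_right e g"
    unfolding theta_eq_def
    by (simp add: theta_ideal_diff theta_ideal.lmult theta_ideal.rmult fa_fin_letter)
qed

lemma theta_eq_ad_right_pow: "f \<approx> g \<Longrightarrow> (fa_ad_right e ^^ n) f \<approx> (fa_ad_right e ^^ n) g"
  by (induction n) (auto intro: theta_eq_ad_right)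

lemma fa_ad_right_word_lowers_degree:
  "\<exists>g \<in> fa_filtration (length u). fa_ad_right e (fa_word u) \<approx> g"
proof (induction u)
  case Nil
  show ?case
    using fa_filtration_zero theta_eq_refl by (auto simp: fa_word_Nil fa_ad_right_one)
next
  case (Cons x u)
  then obtain g where g: "g \<in> fa_filtration (length u)" "fa_ad_right e (fa_word u) \<approx> g"
    by blast
  define c where "c = lam * \<Theta> x e"
  have "fa_ad_right e (fa_letter x) \<approx> fa_smul c fa_one"
    unfolding c_def fa_ad_right_def theta_eq_def by (rule theta_ideal.rel)
  then have "fa_ad_right e (fa_word (x # u)) \<approx>
      fa_add (fa_mult (fa_letter x) g) (fa_mult (fa_smul c fa_one) (fa_word u))"
    unfolding fa_word_Cons fa_ad_right_mult_letter
    using g(2) fa_fin_letter fa_word_in_filtration[of u "Suc (length u)"]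
    by (intro theta_eq_add theta_eq_mult_left theta_eq_mult_right) (auto simp: fa_filtration_def)
  moreover have "fa_add (fa_mult (fa_letter x) g) (fa_mult (fa_smul c fa_one) (fa_word u))
      \<in> fa_filtration (length (x # u))"
    unfolding fa_mult_smul_left fa_mult_one_left
    using g(1) by (auto intro: fa_filtration_add fa_filtration_smul fa_mult_letter_filtration
        fa_word_in_filtration)
  ultimately show ?case by blast
qed

lemma fa_ad_right_lowers_degree:
  assumes "f \<in> fa_filtration (Suc n)"
  shows "\<exists>g \<in> fa_filtration n. fa_ad_right e f \<approx> g"
proof -
  have "fa_fin f" using assms by (simp add: fa_filtration_def)
  then show ?thesis
    using assms
  proof (induction rule: fa_fin_induct)
    case zero
    show ?case using fa_filtration_zero theta_eq_refl by (auto simp: fa_ad_right_zero)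
  next
    case (update g u c)
    then have "g \<in> fa_filtration (Suc n)" "length u \<le> n"
      using fa_update_filtration[OF update.prems \<open>g u = 0\<close> \<open>c \<noteq> 0\<close>] by simp_all
    then obtain g1 g2 where
      "g1 \<in> fa_filtration n" "fa_ad_right e g \<approx> g1"
      "g2 \<in> fa_filtration n" "fa_ad_right e (fa_word u) \<approx> g2"
      using update.IH fa_ad_right_word_lowers_degree fa_filtration_mono by blast
    then show ?case
      unfolding fa_update_eq_add_word[of g u c, OF \<open>g u = 0\<close>] fa_ad_right_add fa_ad_right_smul
      by (intro bexI[of _ "fa_add g1 (fa_smul c g2)"] theta_eq_add theta_eq_smul
          fa_filtration_add fa_filtration_smul)
  qed
qed

lemma fa_ad_right_nilpotent:
  "f \<in> fa_filtration n \<Longrightarrow> (fa_ad_right e ^^ n) f \<approx> fa_zero"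
proof (induction n arbitrary: f)
  case 0
  then have "f = fa_zero" by (auto simp: fa_filtration_def fa_zero_def)
  then show ?case by (simp add: theta_eq_refl)
next
  case (Suc n)
  then obtain g where "g \<in> fa_filtration n" "fa_ad_right e f \<approx> g"
    using fa_ad_right_lowers_degree by blast
  then have "(fa_ad_right e ^^ n) (fa_ad_right e f) \<approx> fa_zero"
    using Suc.IH theta_eq_ad_right_pow theta_eq_trans by blast
  then show ?case by (simp add: funpow_Suc_right del: funpow.simps)
qed

lemma theta_eq_zero_if_eq_smul_ad_right:
  assumes "fa_fin f" and eigen: "f \<approx> fa_smul c (fa_ad_right e f)"
  shows "f \<approx> fa_zero"
proof -
  have iterate: "f \<approx> fa_smul (c ^ m) ((fa_ad_right e ^^ m) f)" for m
  proof (induction m)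
    case 0
    have "fa_smul (c ^ 0) ((fa_ad_right e ^^ 0) f) = f" by (simp add: fa_smul_def)
    then show ?case by (simp add: theta_eq_refl)
  next
    case (Suc m)
    have "fa_smul (c ^ m) ((fa_ad_right e ^^ m) f) \<approx>
        fa_smul (c ^ m) ((fa_ad_right e ^^ m) (fa_smul c (fa_ad_right e f)))"
      using eigen by (intro theta_eq_smul theta_eq_ad_right_pow)
    also have "\<dots> = fa_smul (c ^ Suc m) ((fa_ad_right e ^^ Suc m) f)"
      unfolding fa_ad_right_pow_smul funpow_Suc_right comp_def
      by (simp add: fa_smul_def ac_simps)
    finally show ?case using Suc.IH theta_eq_trans by blast
  qed
  obtain n where "f \<in> fa_filtration n" using \<open>fa_fin f\<close> by (rule fa_fin_in_filtration)
  then have "fa_smul (c ^ n) ((fa_ad_right e ^^ n) f) \<approx> fa_smul (c ^ n) fa_zero"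
    by (intro theta_eq_smul fa_ad_right_nilpotent)
  moreover have "fa_smul (c ^ n) fa_zero = fa_zero" by (simp add: fa_smul_def fa_zero_def)
  ultimately show ?thesis using iterate theta_eq_trans by metis
qed

end

theorem mainTheorem12:
  fixes sc :: "'k::field \<Rightarrow> 'v::ab_group_add \<Rightarrow> 'v"
    and mult :: "'v \<Rightarrow> 'v \<Rightarrow> 'v"
    and e :: 'v
    and \<Theta> :: "'v \<Rightarrow> 'v \<Rightarrow> 'k"
    and lam :: 'k
    and B :: "'v \<Rightarrow> 'v \<Rightarrow> ('v list \<Rightarrow> 'k)"
  assumes char: "(2::'k) \<noteq> 0"
    and lam: "lam \<noteq> 0"
    and vs: "vector_space sc"
    and mult_add: "\<And>a b c. mult (a + b) c = mult a c + mult b c"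
    and mult_smul: "\<And>r a c. mult (sc r a) c = sc r (mult a c)"
    and mult_comm: "\<And>a b. mult a b = mult b a"
    and mult_assoc: "\<And>a b c. mult (mult a b) c = mult a (mult b c)"
    and unit: "\<And>a. mult e a = a"
    and Theta_add: "\<And>a b c. \<Theta> (a + b) c = \<Theta> a c + \<Theta> b c"
    and Theta_smul: "\<And>r a c. \<Theta> (sc r a) c = r * \<Theta> a c"
    and Theta_antisym: "\<And>a b. \<Theta> a b = - \<Theta> b a"
    and B_fin: "\<And>v w. fa_fin (B v w)"
    and B_add1: "\<And>a b c. theta_eq sc \<Theta> lam (B (a + b) c) (fa_add (B a c) (B b c))"
    and B_smul1: "\<And>r a c. theta_eq sc \<Theta> lam (B (sc r a) c) (fa_smul r (B a c))"
    and B_add2: "\<And>a b c. theta_eq sc \<Theta> lam (B c (a + b)) (fa_add (B c a) (B c b))"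
    and B_smul2: "\<And>r a c. theta_eq sc \<Theta> lam (B c (sc r a)) (fa_smul r (B c a))"
    and B_eq: "\<And>v w z. theta_eq sc \<Theta> lam
                 (fa_add (B (mult v w) z) (B v (mult w z)))
                 (fa_smul (inverse lam) (fa_comm (B v z) (fa_letter w)))"
  shows "\<forall>v w. theta_eq sc \<Theta> lam (B v w) fa_zero"
proof (intro allI)
  fix v z
  let ?b = "B v z"
  have "mult v e = v" using mult_comm unit by metis
  then have "theta_eq sc \<Theta> lam (fa_add ?b ?b) (fa_smul (inverse lam) (fa_ad_right e ?b))"
    using B_eq[of v e z] by (simp add: unit fa_ad_right_def)
  then have "theta_eq sc \<Theta> lam (fa_smul (inverse 2) (fa_add ?b ?b))
      (fa_smul (inverse 2) (fa_smul (inverse lam) (fa_ad_right e ?b)))"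
    by (rule theta_eq_smul)
  moreover have "fa_smul (inverse 2) (fa_add ?b ?b) = ?b"
    using char by (auto simp: fa_smul_def fa_add_def field_simps)
  moreover have "fa_smul (inverse 2) (fa_smul (inverse lam) (fa_ad_right e ?b)) =
      fa_smul (inverse (2 * lam)) (fa_ad_right e ?b)"
    by (simp add: fa_smul_def mult.assoc)
  ultimately show "theta_eq sc \<Theta> lam ?b fa_zero"
    using B_fin by (intro theta_eq_zero_if_eq_smul_ad_right) simp_all
qed

end
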